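(* Let $m>0$, $\delta>0$, and $\varphi_{\mathrm{lead}}(M)=-\frac{16\pi^2}{\log\left(\frac{M\delta}{4m^2}\right)^2+\pi^2}$ for $M\ge4m^2$. For $t>0$ and $\mathbf p\in\mathbb{R}^3$ define the (improper) integral $$C(t,\mathbf p)=-\lim_{R\to\infty}\int_{4m^2}^R\varphi_{\mathrm{lead}}(M)\frac{\sin(\omega_Mt)}{\omega_M}dM,\qquad\omega_M=\sqrt{|\mathbf p|^2+M}.$$ Then there is a constant $C_0>0$ independent of $\mathbf p$ such that $|C(t,\mathbf p)|\le C_0/t$ for all $t>0$, and $t\mapsto C(t,\mathbf p)$ is integrable near $t=0$ with $\sup_{\mathbf p\in\mathbb{R}^3}\int_0^{\tau}|C(t,\mathbf p)|dt<\infty$ for some $\tau>0$. *)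

theory Defs
  imports "HOL-Analysis.Analysis"
begin

definition phi_lead :: "real \<Rightarrow> real \<Rightarrow> real \<Rightarrow> real" where
  "phi_lead m \<delta> M = - (16 * pi\<^sup>2) / ((ln (M * \<delta> / (4 * m\<^sup>2)))\<^sup>2 + pi\<^sup>2)"

definition omega :: "real ^ 3 \<Rightarrow> real \<Rightarrow> real" where
  "omega p M = sqrt ((norm p)\<^sup>2 + M)"

definition C_trunc :: "real \<Rightarrow> real \<Rightarrow> real \<Rightarrow> real ^ 3 \<Rightarrow> real \<Rightarrow> real" where
  "C_trunc m \<delta> t p R =
     integral {4 * m\<^sup>2..R} (\<lambda>M. phi_lead m \<delta> M * sin (omega p M * t) / omega p M)"

definition C_fun :: "real \<Rightarrow> real \<Rightarrow> real \<Rightarrow> real ^ 3 \<Rightarrow> real" where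
  "C_fun m \<delta> t p = - Lim at_top (\<lambda>R. C_trunc m \<delta> t p R)"

end

theory Submission
  imports Defs
begin

text \<open>Since \<open>sin (\<omega> t) / \<omega> = -(2/t) d/dM cos (\<omega> t)\<close>, integration by parts trades the
  oscillating factor for the derivative of \<open>phi_lead\<close>, and \<open>phi_lead\<close> is monotone on each side
  of \<open>M = 4m\<^sup>2/\<delta>\<close>, where it attains its minimum \<open>-16\<close>. On an interval of monotonicity the
  integral is therefore at most \<open>4/t\<close> times the larger of \<open>|phi_lead|\<close> at the endpoints. This
  gives convergence (as \<open>phi_lead \<longrightarrow> 0\<close>) and the bound \<open>128/t\<close>, uniformly in \<open>p\<close>. For
  small \<open>t\<close> split at \<open>M = 1/t\<close>: below, the integrand is at most \<open>16 t\<close>; above, the bound is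
  \<open>4/t |phi_lead (1/t)| = 64\<pi>\<^sup>2 / (t (ln\<^sup>2 (\<delta>/(4m\<^sup>2t)) + \<pi>\<^sup>2))\<close>, whose primitive
  \<open>-64\<pi> arctan (ln (\<delta>/(4m\<^sup>2t)) / \<pi>)\<close> stays bounded as \<open>t \<longrightarrow> 0\<close>.\<close>

lemma abs_integral_mult_le_if_nonneg:
  fixes w h :: "real \<Rightarrow> real"
  assumes w: "(w has_integral I) S" and wh: "(\<lambda>x. w x * h x) integrable_on S"
    and nonneg: "\<And>x. x \<in> S \<Longrightarrow> 0 \<le> w x" and bound: "\<And>x. x \<in> S \<Longrightarrow> \<bar>h x\<bar> \<le> V"
  shows "\<bar>integral S (\<lambda>x. w x * h x)\<bar> \<le> V * I"
proof -
  have "norm (integral S (\<lambda>x. w x * h x)) \<le> integral S (\<lambda>x. V * w x)"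
  proof (rule integral_norm_bound_integral[OF wh])
    show "(\<lambda>x. V * w x) integrable_on S"
      using has_integral_mult_right[OF w] by blast
    fix x assume "x \<in> S"
    then show "norm (w x * h x) \<le> V * w x"
      using mult_left_mono[OF bound nonneg, of x x] nonneg[of x] by (simp add: abs_mult mult.commute)
  qed
  then show ?thesis
    using integral_unique[OF has_integral_mult_right[OF w, of V]] by (simp add: integral_unique[OF w])
qed

lemma abs_integral_mult_deriv_le:
  fixes g v :: "real \<Rightarrow> real"
  assumes "a \<le> b"
    and g: "\<And>x. x \<in> {a..b} \<Longrightarrow> (g has_real_derivative g' x) (at x)"
    and v: "\<And>x. x \<in> {a..b} \<Longrightarrow> (v has_real_derivative v' x) (at x)"
    and "continuous_on {a..b} g'" "continuous_on {a..b} v'"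
    and sign: "(\<forall>x\<in>{a..b}. 0 \<le> g' x) \<or> (\<forall>x\<in>{a..b}. g' x \<le> 0)"
    and bound: "\<And>x. x \<in> {a..b} \<Longrightarrow> \<bar>v x\<bar> \<le> V"
  shows "\<bar>integral {a..b} (\<lambda>x. g x * v' x)\<bar> \<le> V * (\<bar>g a\<bar> + \<bar>g b\<bar> + \<bar>g b - g a\<bar>)"
proof -
  have cont: "continuous_on {a..b} g" "continuous_on {a..b} v"
    using g v by (metis has_real_derivative_imp_continuous_on)+
  have "V \<ge> 0"
    using bound[of a] \<open>a \<le> b\<close> by auto
  have "(\<lambda>x. g x * v' x) integrable_on {a..b}"
    by (intro integrable_continuous_interval continuous_intros cont assms)
  then have "((\<lambda>x. g' x * v x) has_integral
      g b * v b - g a * v a - integral {a..b} (\<lambda>x. g x * v' x)) {a..b}"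
    using g v
    by (intro integration_by_parts[OF bounded_bilinear_mult \<open>a \<le> b\<close> cont])
       (auto simp: has_real_derivative_iff_has_vector_derivative)
  then have parts: "integral {a..b} (\<lambda>x. g x * v' x)
      = g b * v b - g a * v a - integral {a..b} (\<lambda>x. g' x * v x)"
    by (simp add: integral_unique)
  have g': "(g' has_integral g b - g a) {a..b}"
    using g by (intro fundamental_theorem_of_calculus \<open>a \<le> b\<close>)
       (auto simp: has_real_derivative_iff_has_vector_derivative intro: has_vector_derivative_at_within)
  have g'v: "(\<lambda>x. g' x * v x) integrable_on {a..b}"
    by (intro integrable_continuous_interval continuous_intros cont assms)
  have V_abs: "V * (g b - g a) \<le> V * \<bar>g b - g a\<bar>" "V * - (g b - g a) \<le> V * \<bar>g b - g a\<bar>"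
    using \<open>V \<ge> 0\<close> by (simp_all add: mult_left_mono)
  have "\<bar>integral {a..b} (\<lambda>x. g' x * v x)\<bar> \<le> V * \<bar>g b - g a\<bar>"
    using sign
  proof
    assume "\<forall>x\<in>{a..b}. 0 \<le> g' x"
    then show ?thesis
      using abs_integral_mult_le_if_nonneg[OF g' g'v _ bound] V_abs(1) by fastforce
  next
    assume "\<forall>x\<in>{a..b}. g' x \<le> 0"
    then have "\<bar>integral {a..b} (\<lambda>x. - g' x * v x)\<bar> \<le> V * - (g b - g a)"
      using g'v by (intro abs_integral_mult_le_if_nonneg[OF has_integral_neg[OF g'] _ _ bound])
         (auto simp: integrable_neg)
    then show ?thesis
      using V_abs(2) by simp
  qed
  moreover have "\<bar>g a * v a\<bar> \<le> \<bar>g a\<bar> * V" "\<bar>g b * v b\<bar> \<le> \<bar>g b\<bar> * V"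
    using bound[of a] bound[of b] \<open>a \<le> b\<close> by (auto simp: abs_mult intro: mult_left_mono)
  ultimately show ?thesis
    unfolding parts by (simp add: distrib_left mult.commute) linarith
qed

lemma convergent_at_top_if_dist_le:
  fixes F :: "real \<Rightarrow> 'a::complete_space"
  assumes g: "(g \<longlongrightarrow> 0) at_top"
    and dist: "\<And>x y. b \<le> x \<Longrightarrow> x \<le> y \<Longrightarrow> dist (F y) (F x) \<le> g x"
  shows "\<exists>L. (F \<longlongrightarrow> L) at_top"
proof -
  have "cauchy_filter (filtermap F at_top)"
    unfolding cauchy_filter_metric_filtermap
  proof (intro allI impI)
    fix e :: real assume "0 < e"
    then obtain x0 where x0: "\<And>x. x0 \<le> x \<Longrightarrow> g x < e"
      using order_tendstoD(2)[OF g] by (auto simp: eventually_at_top_linorder)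
    have "dist (F x) (F y) < e" if "max b x0 \<le> x" "max b x0 \<le> y" for x y
      using dist[of x y] dist[of y x] x0[of x] x0[of y] that
      by (cases "x \<le> y") (auto simp: dist_commute)
    then show "\<exists>P. eventually P at_top \<and> (\<forall>x y. P x \<and> P y \<longrightarrow> dist (F x) (F y) < e)"
      using eventually_ge_at_top[of "max b x0"] by blast
  qed
  then obtain L where "filtermap F at_top \<le> nhds L"
    using cauchy_filter_complete_converges[OF _ complete_UNIV, of "filtermap F at_top"]
    by (auto simp: filtermap_bot_iff)
  then show ?thesis
    unfolding filterlim_def by blast
qed

definition phi_lead_deriv :: "real \<Rightarrow> real \<Rightarrow> real \<Rightarrow> real" where
  "phi_lead_deriv m \<delta> M =
     32 * pi\<^sup>2 * ln (M * \<delta> / (4 * m\<^sup>2)) / (M * ((ln (M * \<delta> / (4 * m\<^sup>2)))\<^sup>2 + pi\<^sup>2)\<^sup>2)"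

lemma phi_lead_nonpos: "phi_lead m \<delta> M \<le> 0"
  unfolding phi_lead_def by (intro divide_nonpos_pos) (auto simp: add_nonneg_pos)

lemma phi_lead_ge: "-16 \<le> phi_lead m \<delta> M"
proof -
  have "16 * pi\<^sup>2 / ((ln (M * \<delta> / (4 * m\<^sup>2)))\<^sup>2 + pi\<^sup>2) \<le> 16 * pi\<^sup>2 / pi\<^sup>2"
    by (intro divide_left_mono) (auto intro!: mult_pos_pos add_nonneg_pos)
  then show ?thesis
    by (simp add: phi_lead_def)
qed

lemma phi_lead_has_real_derivative:
  assumes "0 < m" "0 < \<delta>" "0 < M"
  shows "(phi_lead m \<delta> has_real_derivative phi_lead_deriv m \<delta> M) (at M)"
  unfolding phi_lead_def[abs_def] using assms
  by (auto intro!: derivative_eq_intros simp: phi_lead_deriv_def power2_eq_square mult_ac)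

lemma phi_lead_deriv_nonneg:
  assumes "0 < m" "0 < \<delta>" "4 * m\<^sup>2 / \<delta> \<le> M"
  shows "0 \<le> phi_lead_deriv m \<delta> M"
proof -
  have "1 \<le> M * \<delta> / (4 * m\<^sup>2)"
    using assms by (simp add: field_simps)
  moreover have "0 < M"
    using assms by (smt (verit) divide_pos_pos zero_less_power)
  ultimately show ?thesis
    unfolding phi_lead_deriv_def by (simp add: add_nonneg_pos)
qed

lemma phi_lead_deriv_nonpos:
  assumes "0 < m" "0 < \<delta>" "0 < M" "M \<le> 4 * m\<^sup>2 / \<delta>"
  shows "phi_lead_deriv m \<delta> M \<le> 0"
proof -
  have "M * \<delta> / (4 * m\<^sup>2) \<le> 1" "0 < M * \<delta> / (4 * m\<^sup>2)"
    using assms by (simp_all add: field_simps)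
  then show ?thesis
    unfolding phi_lead_deriv_def using assms
    by (intro divide_nonpos_pos) (auto simp: add_nonneg_pos mult_nonneg_nonpos)
qed

lemma phi_lead_mono:
  assumes "0 < m" "0 < \<delta>" "4 * m\<^sup>2 / \<delta> \<le> x" "x \<le> y"
  shows "phi_lead m \<delta> x \<le> phi_lead m \<delta> y"
proof -
  have "1 \<le> x * \<delta> / (4 * m\<^sup>2)" "x * \<delta> / (4 * m\<^sup>2) \<le> y * \<delta> / (4 * m\<^sup>2)"
    using assms by (simp_all add: field_simps)
  then have "0 \<le> ln (x * \<delta> / (4 * m\<^sup>2))" "ln (x * \<delta> / (4 * m\<^sup>2)) \<le> ln (y * \<delta> / (4 * m\<^sup>2))"
    by simp_all
  then have "(ln (x * \<delta> / (4 * m\<^sup>2)))\<^sup>2 + pi\<^sup>2 \<le> (ln (y * \<delta> / (4 * m\<^sup>2)))\<^sup>2 + pi\<^sup>2"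
    by (simp add: power_mono)
  then show ?thesis
    unfolding phi_lead_def by (intro divide_left_mono_neg) (auto simp: add_nonneg_pos)
qed

lemma tendsto_phi_lead_at_top:
  assumes "0 < m" "0 < \<delta>"
  shows "(phi_lead m \<delta> \<longlongrightarrow> 0) at_top"
proof -
  have "filterlim (\<lambda>M. M * (\<delta> / (4 * m\<^sup>2))) at_top at_top"
    using assms by (intro filterlim_at_top_mult_tendsto_pos[OF tendsto_const] filterlim_ident) auto
  then have "filterlim (\<lambda>M. pi\<^sup>2 + (ln (M * (\<delta> / (4 * m\<^sup>2))))\<^sup>2) at_top at_top"
    by (intro filterlim_tendsto_add_at_top[OF tendsto_const] filterlim_pow_at_top
        filterlim_compose[OF ln_at_top]) auto
  then have "filterlim (\<lambda>M. (ln (M * \<delta> / (4 * m\<^sup>2)))\<^sup>2 + pi\<^sup>2) at_top at_top"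
    by (simp add: add.commute)
  then show ?thesis
    unfolding phi_lead_def[abs_def]
    by (intro tendsto_divide_0[OF tendsto_const] filterlim_at_top_imp_at_infinity)
qed

lemma continuous_on_phi_lead:
  assumes "0 < m" "0 < \<delta>" "\<And>M. M \<in> S \<Longrightarrow> 0 < M"
  shows "continuous_on S (phi_lead m \<delta>)" "continuous_on S (phi_lead_deriv m \<delta>)"
proof -
  have "0 \<notin> S"
    using assms(3) by force
  then show "continuous_on S (phi_lead m \<delta>)" "continuous_on S (phi_lead_deriv m \<delta>)"
    unfolding phi_lead_def[abs_def] phi_lead_deriv_def[abs_def]
    using assms by (auto intro!: continuous_intros simp: add_nonneg_pos)
qed

lemma omega_pos: "0 < M \<Longrightarrow> 0 < omega p M"
  unfolding omega_def by (simp add: add_nonneg_pos)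

lemma cos_omega_has_real_derivative:
  assumes "0 < M" "t \<noteq> 0"
  shows "((\<lambda>M. - 2 / t * cos (omega p M * t)) has_real_derivative
    sin (omega p M * t) / omega p M) (at M)"
proof -
  have "0 < (norm p)\<^sup>2 + M"
    using assms by (simp add: add_nonneg_pos)
  then show ?thesis
    unfolding omega_def using assms
    by (auto intro!: derivative_eq_intros simp: field_simps)
qed

definition C_integrand :: "real \<Rightarrow> real \<Rightarrow> real \<Rightarrow> real ^ 3 \<Rightarrow> real \<Rightarrow> real" where
  "C_integrand m \<delta> t p M = phi_lead m \<delta> M * sin (omega p M * t) / omega p M"

lemma C_trunc_eq_integral: "C_trunc m \<delta> t p R = integral {4 * m\<^sup>2..R} (C_integrand m \<delta> t p)"
  unfolding C_trunc_def C_integrand_def ..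

lemma continuous_on_C_integrand:
  assumes "0 < m" "0 < \<delta>" "\<And>M. M \<in> S \<Longrightarrow> 0 < M"
  shows "continuous_on S (C_integrand m \<delta> t p)"
proof -
  have "omega p M \<noteq> 0" if "M \<in> S" for M
    using omega_pos[OF assms(3)[OF that], of p] by simp
  then show ?thesis
    unfolding C_integrand_def[abs_def] omega_def[abs_def] using assms
    by (intro continuous_intros continuous_on_phi_lead) (auto simp: omega_def)
qed

lemma integrable_C_integrand:
  assumes "0 < m" "0 < \<delta>" "0 < a"
  shows "C_integrand m \<delta> t p integrable_on {a..b}"
  using assms by (intro integrable_continuous_interval continuous_on_C_integrand) auto

lemma abs_C_integrand_le:
  assumes "0 < M" "0 \<le> t"
  shows "\<bar>C_integrand m \<delta> t p M\<bar> \<le> 16 * t"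
proof -
  have "0 < omega p M"
    using omega_pos[OF assms(1)] .
  then have "\<bar>sin (omega p M * t)\<bar> / omega p M \<le> t"
    using abs_sin_x_le_abs_x[of "omega p M * t"] assms(2) by (simp add: divide_le_eq abs_mult mult.commute)
  moreover have "\<bar>phi_lead m \<delta> M\<bar> \<le> 16"
    using phi_lead_ge[of m \<delta> M] phi_lead_nonpos[of m \<delta> M] by linarith
  ultimately have "\<bar>phi_lead m \<delta> M\<bar> * (\<bar>sin (omega p M * t)\<bar> / omega p M) \<le> 16 * t"
    using \<open>0 < omega p M\<close> by (intro mult_mono) auto
  then show ?thesis
    unfolding C_integrand_def using \<open>0 < omega p M\<close> by (simp add: abs_mult)
qed

lemma abs_integral_C_integrand_le:
  assumes "0 < m" "0 < \<delta>" "0 < t" "0 < a" "a \<le> b"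
    and monotone: "b \<le> 4 * m\<^sup>2 / \<delta> \<or> 4 * m\<^sup>2 / \<delta> \<le> a"
  shows "\<bar>integral {a..b} (C_integrand m \<delta> t p)\<bar>
    \<le> 4 / t * max (- phi_lead m \<delta> a) (- phi_lead m \<delta> b)"
proof -
  have pos: "0 < M" if "M \<in> {a..b}" for M
    using that assms by auto
  have "\<bar>integral {a..b} (\<lambda>M. phi_lead m \<delta> M * (sin (omega p M * t) / omega p M))\<bar>
      \<le> 2 / t * (\<bar>phi_lead m \<delta> a\<bar> + \<bar>phi_lead m \<delta> b\<bar> + \<bar>phi_lead m \<delta> b - phi_lead m \<delta> a\<bar>)"
  proof (rule abs_integral_mult_deriv_le[OF \<open>a \<le> b\<close>])
    show "(phi_lead m \<delta> has_real_derivative phi_lead_deriv m \<delta> M) (at M)" if "M \<in> {a..b}" for M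
      using phi_lead_has_real_derivative assms pos[OF that] by blast
    show "((\<lambda>M. - 2 / t * cos (omega p M * t)) has_real_derivative
        sin (omega p M * t) / omega p M) (at M)" if "M \<in> {a..b}" for M
      using cos_omega_has_real_derivative pos[OF that] assms(3) by simp
    show "continuous_on {a..b} (phi_lead_deriv m \<delta>)"
      using continuous_on_phi_lead(2) assms pos by blast
    have "omega p M \<noteq> 0" if "M \<in> {a..b}" for M
      using omega_pos[OF pos[OF that], of p] by simp
    then show "continuous_on {a..b} (\<lambda>M. sin (omega p M * t) / omega p M)"
      unfolding omega_def[abs_def] by (intro continuous_intros) auto
    show "(\<forall>M\<in>{a..b}. 0 \<le> phi_lead_deriv m \<delta> M) \<or> (\<forall>M\<in>{a..b}. phi_lead_deriv m \<delta> M \<le> 0)"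
      using monotone phi_lead_deriv_nonneg[OF assms(1,2)] phi_lead_deriv_nonpos[OF assms(1,2)] pos
      by force
    show "\<bar>- 2 / t * cos (omega p M * t)\<bar> \<le> 2 / t" for M
      using assms(3) by (auto simp: abs_mult intro!: divide_right_mono)
  qed
  moreover have "\<bar>phi_lead m \<delta> a\<bar> + \<bar>phi_lead m \<delta> b\<bar> + \<bar>phi_lead m \<delta> b - phi_lead m \<delta> a\<bar>
      = 2 * max (- phi_lead m \<delta> a) (- phi_lead m \<delta> b)"
    using phi_lead_nonpos[of m \<delta> a] phi_lead_nonpos[of m \<delta> b] by (auto simp: max_def)
  moreover have "(\<lambda>M. phi_lead m \<delta> M * (sin (omega p M * t) / omega p M)) = C_integrand m \<delta> t p"
    by (simp add: C_integrand_def fun_eq_iff)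
  ultimately have "\<bar>integral {a..b} (C_integrand m \<delta> t p)\<bar>
      \<le> 2 / t * (2 * max (- phi_lead m \<delta> a) (- phi_lead m \<delta> b))"
    by (simp only:)
  then show ?thesis
    by simp
qed

lemma C_trunc_diff:
  assumes "0 < m" "0 < \<delta>" "4 * m\<^sup>2 \<le> x" "x \<le> y"
  shows "C_trunc m \<delta> t p y - C_trunc m \<delta> t p x = integral {x..y} (C_integrand m \<delta> t p)"
proof -
  have "integral {4 * m\<^sup>2..x} (C_integrand m \<delta> t p) + integral {x..y} (C_integrand m \<delta> t p)
      = integral {4 * m\<^sup>2..y} (C_integrand m \<delta> t p)"
    using assms by (intro Henstock_Kurzweil_Integration.integral_combine integrable_C_integrand) auto
  then show ?thesis
    unfolding C_trunc_eq_integral by simp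
qed

lemma abs_C_trunc_le:
  assumes "0 < m" "0 < \<delta>" "0 < t"
  shows "\<bar>C_trunc m \<delta> t p R\<bar> \<le> 128 / t"
proof (cases "4 * m\<^sup>2 \<le> R")
  case False
  then show ?thesis
    using assms(3) by (simp add: C_trunc_eq_integral)
next
  case True
  define c where "c = max (4 * m\<^sup>2) (min (4 * m\<^sup>2 / \<delta>) R)"
  have piece: "\<bar>integral {x..y} (C_integrand m \<delta> t p)\<bar> \<le> 64 / t"
    if "4 * m\<^sup>2 \<le> x" "x \<le> y" "y \<le> 4 * m\<^sup>2 / \<delta> \<or> 4 * m\<^sup>2 / \<delta> \<le> x" for x y
  proof -
    have "max (- phi_lead m \<delta> x) (- phi_lead m \<delta> y) \<le> 16"
      using phi_lead_ge[of m \<delta> x] phi_lead_ge[of m \<delta> y] by simp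
    then have "4 / t * max (- phi_lead m \<delta> x) (- phi_lead m \<delta> y) \<le> 4 / t * 16"
      using assms(3) by (intro mult_left_mono) auto
    moreover have "0 < x"
      using that assms(1) by (smt (verit) zero_less_power)
    ultimately show ?thesis
      using abs_integral_C_integrand_le[OF assms \<open>0 < x\<close> that(2,3), of p] by simp
  qed
  have c: "4 * m\<^sup>2 \<le> c" "c \<le> R"
    using True by (auto simp: c_def)
  have "C_trunc m \<delta> t p R
      = integral {4 * m\<^sup>2..c} (C_integrand m \<delta> t p) + integral {c..R} (C_integrand m \<delta> t p)"
    using C_trunc_diff[OF assms(1,2) c, of t p] by (simp add: C_trunc_eq_integral)
  moreover have "c \<le> 4 * m\<^sup>2 / \<delta> \<or> 4 * m\<^sup>2 / \<delta> \<le> 4 * m\<^sup>2" "R \<le> 4 * m\<^sup>2 / \<delta> \<or> 4 * m\<^sup>2 / \<delta> \<le> c"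
    by (auto simp: c_def)
  ultimately show ?thesis
    using piece[OF order_refl c(1)] piece[OF c]
      abs_triangle_ineq[of "integral {4 * m\<^sup>2..c} (C_integrand m \<delta> t p)" "integral {c..R} (C_integrand m \<delta> t p)"]
    by simp
qed

lemma C_trunc_convergent:
  assumes "0 < m" "0 < \<delta>" "0 < t"
  shows "\<exists>L. ((\<lambda>R. C_trunc m \<delta> t p R) \<longlongrightarrow> L) at_top"
proof (rule convergent_at_top_if_dist_le)
  show "((\<lambda>x. 4 / t * - phi_lead m \<delta> x) \<longlongrightarrow> 0) at_top"
    using tendsto_mult_left[OF tendsto_minus[OF tendsto_phi_lead_at_top[OF assms(1,2)]], of "4 / t"]
    by simp
  fix x y assume x: "max (4 * m\<^sup>2) (4 * m\<^sup>2 / \<delta>) \<le> x" and "x \<le> y"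
  have "0 < x"
    using x assms(1) by (smt (verit) zero_less_power)
  have "max (- phi_lead m \<delta> x) (- phi_lead m \<delta> y) = - phi_lead m \<delta> x"
    using phi_lead_mono[OF assms(1,2) _ \<open>x \<le> y\<close>] x by simp
  then show "dist (C_trunc m \<delta> t p y) (C_trunc m \<delta> t p x) \<le> 4 / t * - phi_lead m \<delta> x"
    using abs_integral_C_integrand_le[OF assms \<open>0 < x\<close> \<open>x \<le> y\<close>] x
    by (simp add: dist_real_def C_trunc_diff[OF assms(1,2) _ \<open>x \<le> y\<close>])
qed

lemma abs_C_trunc_le_small_t:
  assumes "0 < m" "0 < \<delta>" "0 < t" "max (4 * m\<^sup>2) (4 * m\<^sup>2 / \<delta>) \<le> 1 / t" "1 / t \<le> R"
  shows "\<bar>C_trunc m \<delta> t p R\<bar> \<le> 16 + 4 / t * - phi_lead m \<delta> (1 / t)"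
proof -
  have "0 < 4 * m\<^sup>2"
    using assms(1) by simp
  have "\<bar>C_trunc m \<delta> t p (1 / t)\<bar> \<le> 16 * t * (1 / t - 4 * m\<^sup>2)"
  proof -
    have int: "(C_integrand m \<delta> t p has_integral C_trunc m \<delta> t p (1 / t)) {4 * m\<^sup>2..1 / t}"
      unfolding C_trunc_eq_integral
      by (intro integrable_integral integrable_C_integrand assms(1,2) \<open>0 < 4 * m\<^sup>2\<close>)
    have bound: "norm (C_integrand m \<delta> t p M) \<le> 16 * t" if "M \<in> {4 * m\<^sup>2..1 / t}" for M
      using that less_le_trans[OF \<open>0 < 4 * m\<^sup>2\<close>] assms(3) by (simp add: abs_C_integrand_le)
    show ?thesis
      using has_integral_bound[where f = "C_integrand m \<delta> t p", unfolded cbox_interval, OF _ int bound]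
        assms(3,4) by simp
  qed
  also have "\<dots> \<le> 16"
    using assms(3,4) \<open>0 < 4 * m\<^sup>2\<close> by (simp add: field_simps)
  finally have "\<bar>C_trunc m \<delta> t p (1 / t)\<bar> \<le> 16" .
  moreover have "max (- phi_lead m \<delta> (1 / t)) (- phi_lead m \<delta> R) = - phi_lead m \<delta> (1 / t)"
    using phi_lead_mono[OF assms(1,2) _ assms(5)] assms(4) by simp
  then have "\<bar>C_trunc m \<delta> t p R - C_trunc m \<delta> t p (1 / t)\<bar> \<le> 4 / t * - phi_lead m \<delta> (1 / t)"
    using abs_integral_C_integrand_le[OF assms(1-3) _ assms(5)] assms(3,4) \<open>0 < 4 * m\<^sup>2\<close>
    by (simp add: C_trunc_diff[OF assms(1,2) _ assms(5)])
  ultimately show ?thesis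
    by linarith
qed

lemma C_trunc_tendsto_C_fun:
  assumes "0 < m" "0 < \<delta>" "0 < t"
  shows "((\<lambda>R. C_trunc m \<delta> t p R) \<longlongrightarrow> - C_fun m \<delta> t p) at_top"
proof -
  obtain L where L: "((\<lambda>R. C_trunc m \<delta> t p R) \<longlongrightarrow> L) at_top"
    using C_trunc_convergent[OF assms] by blast
  then have "Lim at_top (\<lambda>R. C_trunc m \<delta> t p R) = L"
    by (intro tendsto_Lim) auto
  then show ?thesis
    using L by (simp add: C_fun_def)
qed

lemma C_fun_time_zero: "C_fun m \<delta> 0 p = 0"
  unfolding C_fun_def C_trunc_def by (simp add: tendsto_Lim)

lemma abs_C_fun_le:
  assumes "0 < m" "0 < \<delta>" "0 < t" and bound: "\<And>R. R0 \<le> R \<Longrightarrow> \<bar>C_trunc m \<delta> t p R\<bar> \<le> B"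
  shows "\<bar>C_fun m \<delta> t p\<bar> \<le> B"
proof -
  have "((\<lambda>R. \<bar>C_trunc m \<delta> t p R\<bar>) \<longlongrightarrow> \<bar>- C_fun m \<delta> t p\<bar>) at_top"
    by (intro tendsto_rabs C_trunc_tendsto_C_fun assms)
  moreover have "eventually (\<lambda>R. \<bar>C_trunc m \<delta> t p R\<bar> \<le> B) at_top"
    using eventually_ge_at_top[of R0] by eventually_elim (rule bound)
  ultimately show ?thesis
    using tendsto_upperbound by fastforce
qed

definition C_majorant :: "real \<Rightarrow> real \<Rightarrow> real \<Rightarrow> real" where
  "C_majorant m \<delta> t = 16 + 4 / t * - phi_lead m \<delta> (1 / t)"

lemma abs_C_fun_le_C_majorant:
  assumes "0 < m" "0 < \<delta>" "0 \<le> t" "t \<le> 1 / max (4 * m\<^sup>2) (4 * m\<^sup>2 / \<delta>)"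
  shows "\<bar>C_fun m \<delta> t p\<bar> \<le> C_majorant m \<delta> t"
proof (cases "t = 0")
  case True
  then show ?thesis
    by (simp add: C_fun_time_zero C_majorant_def)
next
  case False
  then have "0 < t"
    using assms(3) by simp
  moreover have "max (4 * m\<^sup>2) (4 * m\<^sup>2 / \<delta>) \<le> 1 / t"
    using assms \<open>0 < t\<close> by (simp add: le_divide_eq less_max_iff_disj mult.commute)
  ultimately show ?thesis
    unfolding C_majorant_def using abs_C_trunc_le_small_t[OF assms(1,2)]
    by (intro abs_C_fun_le[OF assms(1,2)]) auto
qed

text \<open>At \<open>t = 0\<close> the primitive is extended continuously: \<open>arctan\<close> tends to \<open>\<pi>/2\<close>.\<close>
definition C_majorant_primitive :: "real \<Rightarrow> real \<Rightarrow> real \<Rightarrow> real" where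
  "C_majorant_primitive m \<delta> t =
     (if t = 0 then - 32 * pi\<^sup>2 else 16 * t - 64 * pi * arctan (ln (1 / t * \<delta> / (4 * m\<^sup>2)) / pi))"

lemma C_majorant_primitive_has_real_derivative:
  assumes "0 < m" "0 < \<delta>" "0 < t"
  shows "(C_majorant_primitive m \<delta> has_real_derivative C_majorant m \<delta> t) (at t)"
proof -
  let ?F = "\<lambda>t. 16 * t - 64 * pi * arctan (ln (1 / t * \<delta> / (4 * m\<^sup>2)) / pi)"
  have "eventually (\<lambda>x. x \<noteq> 0) (nhds t)"
    using t1_space_nhds[of t 0] assms(3) by simp
  then have ev: "eventually (\<lambda>x. C_majorant_primitive m \<delta> x = ?F x) (nhds t)"
    by eventually_elim (simp add: C_majorant_primitive_def)
  have "(?F has_real_derivative C_majorant m \<delta> t) (at t)"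
    using assms
    by (auto intro!: derivative_eq_intros simp: C_majorant_def phi_lead_def)
       (simp add: inverse_eq_divide power_divide field_simps add_pos_nonneg)
  then show ?thesis
    using DERIV_cong_ev[OF refl ev refl] by simp
qed

lemma tendsto_C_majorant_primitive_at_right_0:
  assumes "0 < m" "0 < \<delta>"
  shows "(C_majorant_primitive m \<delta> \<longlongrightarrow> C_majorant_primitive m \<delta> 0) (at_right 0)"
proof -
  have "0 < \<delta> / (4 * m\<^sup>2)"
    using assms by simp
  then have lim: "filterlim (\<lambda>t. \<delta> / (4 * m\<^sup>2) * inverse t) at_top (at_right (0::real))"
    by (rule filterlim_tendsto_pos_mult_at_top[OF tendsto_const _ filterlim_inverse_at_top_right])
  have "filterlim (\<lambda>t. inverse pi * ln (\<delta> / (4 * m\<^sup>2) * inverse t)) at_top (at_right (0::real))"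
    by (rule filterlim_tendsto_pos_mult_at_top[OF tendsto_const _ filterlim_compose[OF ln_at_top lim]]) simp
  then have "filterlim (\<lambda>t. ln (1 / t * \<delta> / (4 * m\<^sup>2)) / pi) at_top (at_right 0)"
    by (simp add: field_simps)
  then have "((\<lambda>t. 16 * t - 64 * pi * arctan (ln (1 / t * \<delta> / (4 * m\<^sup>2)) / pi))
      \<longlongrightarrow> 16 * 0 - 64 * pi * (pi / 2)) (at_right 0)"
    by (intro tendsto_intros filterlim_compose[OF tendsto_arctan_at_top])
  moreover have "eventually (\<lambda>t. 16 * t - 64 * pi * arctan (ln (1 / t * \<delta> / (4 * m\<^sup>2)) / pi)
      = C_majorant_primitive m \<delta> t) (at_right 0)"
    using eventually_at_right_less[of 0] by eventually_elim (simp add: C_majorant_primitive_def)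
  ultimately show ?thesis
    by (simp add: Lim_transform_eventually C_majorant_primitive_def power2_eq_square)
qed

lemma C_majorant_has_integral:
  assumes "0 < m" "0 < \<delta>" "0 < \<tau>"
  shows "(C_majorant m \<delta> has_integral
    C_majorant_primitive m \<delta> \<tau> - C_majorant_primitive m \<delta> 0) {0..\<tau>}"
proof (rule fundamental_theorem_of_calculus_interior)
  have isCont: "isCont (C_majorant_primitive m \<delta>) t" if "0 < t" for t
    using C_majorant_primitive_has_real_derivative[OF assms(1,2) that] DERIV_isCont by blast
  show "continuous_on {0..\<tau>} (C_majorant_primitive m \<delta>)"
  proof (rule continuous_on_IccI)
    show "(C_majorant_primitive m \<delta> \<longlongrightarrow> C_majorant_primitive m \<delta> 0) (at_right 0)"
      by (rule tendsto_C_majorant_primitive_at_right_0[OF assms(1,2)])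
    show "(C_majorant_primitive m \<delta> \<longlongrightarrow> C_majorant_primitive m \<delta> \<tau>) (at_left \<tau>)"
      using isCont[OF assms(3)] by (simp add: isCont_def filterlim_at_split)
    show "(C_majorant_primitive m \<delta> \<longlongrightarrow> C_majorant_primitive m \<delta> x) (at x)" if "0 < x" "x < \<tau>" for x
      using isCont[OF that(1)] by (simp add: isCont_def)
  qed (use assms in auto)
  show "(C_majorant_primitive m \<delta> has_vector_derivative C_majorant m \<delta> t) (at t)"
    if "t \<in> {0<..<\<tau>}" for t
    using C_majorant_primitive_has_real_derivative[OF assms(1,2)] that
    by (simp add: has_real_derivative_iff_has_vector_derivative)
qed (use assms in auto)

lemma C_trunc_borel_measurable:
  assumes "0 < m" "0 < \<delta>"
  shows "(\<lambda>t. C_trunc m \<delta> t p R) \<in> borel_measurable borel"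
proof -
  have "C_trunc m \<delta> t p R = (LINT M : {4 * m\<^sup>2..R} | lborel. C_integrand m \<delta> t p M)" for t
  proof -
    have "0 < M" if "M \<in> {4 * m\<^sup>2..R}" for M
      using that less_le_trans[of 0 "4 * m\<^sup>2" M] assms(1) by simp
    then have "set_integrable lborel {4 * m\<^sup>2..R} (C_integrand m \<delta> t p)"
      unfolding set_integrable_def using assms
      by (intro borel_integrable_compact continuous_on_C_integrand) auto
    then show ?thesis
      unfolding C_trunc_eq_integral using set_borel_integral_eq_integral(2) by metis
  qed
  moreover have "(\<lambda>t. LINT M : {4 * m\<^sup>2..R} | lborel. C_integrand m \<delta> t p M) \<in> borel_measurable borel"
    unfolding set_lebesgue_integral_def C_integrand_def phi_lead_def omega_def
    by (intro lborel.borel_measurable_lebesgue_integral) measurable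
  ultimately show ?thesis
    by simp
qed

lemma C_fun_borel_measurable:
  assumes "0 < m" "0 < \<delta>"
  shows "(\<lambda>t. C_fun m \<delta> t p) \<in> borel_measurable (lebesgue_on {0..\<tau>})"
proof (rule borel_measurable_LIMSEQ_real[where u = "\<lambda>i t. - C_trunc m \<delta> t p (real i)"])
  show "(\<lambda>i. - C_trunc m \<delta> t p (real i)) \<longlonglongrightarrow> C_fun m \<delta> t p"
    if "t \<in> space (lebesgue_on {0..\<tau>})" for t
  proof (cases "t = 0")
    case True
    then show ?thesis
      by (simp add: C_trunc_def C_fun_time_zero)
  next
    case False
    then have "0 < t"
      using that by simp
    then show ?thesis
      using tendsto_minus[OF filterlim_compose[OF C_trunc_tendsto_C_fun[OF assms] filterlim_real_sequentially]]
      by simp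
  qed
  show "(\<lambda>t. - C_trunc m \<delta> t p (real i)) \<in> borel_measurable (lebesgue_on {0..\<tau>})" for i
    using C_trunc_borel_measurable[OF assms]
    by (intro measurable_restrict_space1 measurable_completion borel_measurable_uminus) simp
qed

theorem lemma4p12:
  fixes m \<delta> :: real
  assumes "m > 0" and "\<delta> > 0"
  shows "(\<forall>t>0. \<forall>p. \<exists>L. ((\<lambda>R. C_trunc m \<delta> t p R) \<longlongrightarrow> L) at_top)
    \<and> (\<exists>C0>0. \<forall>t>0. \<forall>p. \<bar>C_fun m \<delta> t p\<bar> \<le> C0 / t)
    \<and> (\<exists>\<tau>>0. (\<forall>p. (\<lambda>t. C_fun m \<delta> t p) absolutely_integrable_on {0..\<tau>})
              \<and> (\<exists>B. \<forall>p. integral {0..\<tau>} (\<lambda>t. \<bar>C_fun m \<delta> t p\<bar>) \<le> B))"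
proof (intro conjI)
  show "\<forall>t>0. \<forall>p. \<exists>L. ((\<lambda>R. C_trunc m \<delta> t p R) \<longlongrightarrow> L) at_top"
    using C_trunc_convergent[OF assms] by blast
  show "\<exists>C0>0. \<forall>t>0. \<forall>p. \<bar>C_fun m \<delta> t p\<bar> \<le> C0 / t"
    using abs_C_fun_le[OF assms _ abs_C_trunc_le[OF assms]] by (intro exI[of _ 128]) auto
  define \<tau> where "\<tau> = 1 / max (4 * m\<^sup>2) (4 * m\<^sup>2 / \<delta>)"
  have "0 < \<tau>"
    using assms by (simp add: \<tau>_def less_max_iff_disj)
  have majorant: "(C_majorant m \<delta> has_integral
      C_majorant_primitive m \<delta> \<tau> - C_majorant_primitive m \<delta> 0) {0..\<tau>}"
    by (rule C_majorant_has_integral[OF assms \<open>0 < \<tau>\<close>])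
  have bound: "norm (C_fun m \<delta> t p) \<le> C_majorant m \<delta> t" if "t \<in> {0..\<tau>}" for t p
    using abs_C_fun_le_C_majorant[OF assms] that by (simp add: \<tau>_def)
  have integrable: "(\<lambda>t. C_fun m \<delta> t p) absolutely_integrable_on {0..\<tau>}" for p
    using majorant bound
    by (intro measurable_bounded_by_integrable_imp_absolutely_integrable[where g = "C_majorant m \<delta>",
          OF C_fun_borel_measurable[OF assms]]) auto
  have "integral {0..\<tau>} (\<lambda>t. \<bar>C_fun m \<delta> t p\<bar>) \<le> integral {0..\<tau>} (C_majorant m \<delta>)" for p
    using integrable[of p] majorant bound
    by (intro integral_le[where g = "C_majorant m \<delta>"]) (auto simp: absolutely_integrable_on_def)
  then show "\<exists>\<tau>>0. (\<forall>p. (\<lambda>t. C_fun m \<delta> t p) absolutely_integrable_on {0..\<tau>})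
      \<and> (\<exists>B. \<forall>p. integral {0..\<tau>} (\<lambda>t. \<bar>C_fun m \<delta> t p\<bar>) \<le> B)"
    using \<open>0 < \<tau>\<close> integrable by blast
qed

end
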